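(* Let $n,d\ge2$, $g(s)=((n+1)s-1)^{d-1}-(-1)^{d-1}$, and for $\mathbf s=(s_1,\ldots,s_{n-1})\in\mathbb R^{n-1}$ let $$\mathbf h(\mathbf s)=\Big(s_k\Big(g\big(1-\textstyle\sum_{j=1}^{n-1}s_j\big)+\sum_{j=1}^{n-1}g(s_j)\Big)-g(s_k)\Big)_{1\le k\le n-1}.$$ Write $s_n:=1-\sum_{k=1}^{n-1}s_k$ and $\Delta_{n-1}=\{\mathbf s\in\mathbb R^{n-1}:s_k\ge0,\ \sum_{k=1}^{n-1}s_k\le1\}$. (i) $\mathbf h(\mathbf s)=\mathbf 0$ for every $\mathbf s\in\Delta_{n-1}$ for which there is a nonempty $K\subseteq\{1,\ldots,n\}$ with $s_k=\frac1{|K|}$ for $k\in K$ and $s_k=0$ for $k\in\{1,\ldots,n\}\setminus K$. (ii) If $d=2$, $\mathbf h$ vanishes identically. (iii) If $d$ is odd, $\mathbf h$ has no zeros in $\Delta_{n-1}$ other than those in (i). (iv) If $d\ge4$ is even, $\mathbf h$ vanishes at $\mathbf s\in\Delta_{n-1}$ if and only if there exist disjoint $K_1,K_2\subseteq\{1,\ldots,n\}$, not both empty, such that one of the following holds: (a) $K_1=\emptyset$, $\frac1{|K_2|}>s^*$, $s_k=\frac1{|K_2|}$ for $k\in K_2$ and $s_k=0$ otherwise; (b) $K_2=\emptyset$, $\frac1{|K_1|}\le s^*$, $s_k=\frac1{|K_1|}$ for $k\in K_1$ and $s_k=0$ otherwise; (c) $K_1,K_2\ne\emptyset$, $s_k=a$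 for $k\in K_1$, $s_k=b$ for $k\in K_2$, $s_k=0$ for $k\notin K_1\cup K_2$, where $a\in(0,s^* )$ is a zero of the polynomial $r(s)=\frac{g(s)}{s}-\frac{|K_2|\,g\big(\frac{1-|K_1|s}{|K_2|}\big)}{1-|K_1|s}$ and $b=\frac{1-|K_1|a}{|K_2|}\in(s^*,1]$.
   Context: For $d\ge4$ even, $s^*$ denotes the unique point $s^*\in[\frac1n,\frac2{n+1})$ such that the polynomial $p(s)=g(s)/s$ is strictly decreasing on $[0,s^*]$ and strictly increasing on $[s^*,\infty)$ (its existence is part of a preceding lemma). *)

theory Defs
  imports Complex_Main
begin

definition gfun :: "nat \<Rightarrow> nat \<Rightarrow> real \<Rightarrow> real" where
  "gfun n d s = ((real n + 1) * s - 1) ^ (d - 1) - (-1) ^ (d - 1)"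

text \<open>The polynomial p(s) = g(s)/s (g(0) = 0), written out via the binomial expansion
  of g, so that it is also defined at s = 0.\<close>
definition pfun :: "nat \<Rightarrow> nat \<Rightarrow> real \<Rightarrow> real" where
  "pfun n d s = (\<Sum>i=1..d-1. real ((d - 1) choose i) * (real n + 1) ^ i
                    * (-1) ^ (d - 1 - i) * s ^ (i - 1))"

definition sstar :: "nat \<Rightarrow> nat \<Rightarrow> real" where
  "sstar n d = (THE t. 1 / real n \<le> t \<and> t < 2 / (real n + 1)
      \<and> strict_antimono_on {0..t} (pfun n d) \<and> strict_mono_on {t..} (pfun n d))"

text \<open>Points s = (s_1,...,s_{n-1}) are represented as functions nat => real, only the
  values at 1..n-1 matter.\<close>
definition hcomp :: "nat \<Rightarrow> nat \<Rightarrow> (nat \<Rightarrow> real) \<Rightarrow> nat \<Rightarrow> real" where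
  "hcomp n d s k = s k * (gfun n d (1 - (\<Sum>j=1..n-1. s j)) + (\<Sum>j=1..n-1. gfun n d (s j)))
                   - gfun n d (s k)"

definition hzero :: "nat \<Rightarrow> nat \<Rightarrow> (nat \<Rightarrow> real) \<Rightarrow> bool" where
  "hzero n d s \<longleftrightarrow> (\<forall>k\<in>{1..n-1}. hcomp n d s k = 0)"

definition sext :: "nat \<Rightarrow> (nat \<Rightarrow> real) \<Rightarrow> nat \<Rightarrow> real" where
  "sext n s k = (if k = n then 1 - (\<Sum>j=1..n-1. s j) else s k)"

definition in_simplex :: "nat \<Rightarrow> (nat \<Rightarrow> real) \<Rightarrow> bool" where
  "in_simplex n s \<longleftrightarrow> (\<forall>k\<in>{1..n-1}. 0 \<le> s k) \<and> (\<Sum>k=1..n-1. s k) \<le> 1"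

definition uniform_on :: "nat \<Rightarrow> (nat \<Rightarrow> real) \<Rightarrow> nat set \<Rightarrow> bool" where
  "uniform_on n s K \<longleftrightarrow> (\<forall>k\<in>K. sext n s k = 1 / real (card K))
      \<and> (\<forall>k\<in>{1..n} - K. sext n s k = 0)"

end

theory Submission
  imports Defs
begin

text \<open>Since \<open>g(s) = s p(s)\<close> and the extended coordinates \<open>s\<^sub>1, ..., s\<^sub>n\<close> sum to 1,
  \<open>h(s) = 0\<close> holds iff \<open>s\<^sub>k G = g(s\<^sub>k)\<close> for all \<open>k \<le> n\<close>, where \<open>G = \<Sum>\<^sub>j g(s\<^sub>j)\<close>;
  equivalently, \<open>p\<close> takes a single value on the nonzero coordinates.
  With \<open>e = d - 1\<close> one has \<open>s\<^sup>2 p'(s) = N\<^sub>e((n+1)s - 1)\<close> for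
  \<open>N\<^sub>e(x) = (e-1)x\<^sup>e + e x\<^sup>e\<^sup>-\<^sup>1 + (-1)\<^sup>e\<close>, which vanishes at \<open>-1\<close> and has derivative
  \<open>e(e-1)x\<^sup>e\<^sup>-\<^sup>2(x+1)\<close>. For even \<open>e\<close> it is positive on \<open>(-1,\<infinity>)\<close>, so \<open>p\<close> is injective on
  \<open>[0,\<infinity>)\<close> and all nonzero coordinates agree. For odd \<open>e \<ge> 3\<close> it changes sign once, at some
  \<open>x\<^sub>0 \<in> [1/2, 1)\<close>, so \<open>p\<close> falls and then rises with turning point \<open>s\<^sup>* = (x\<^sub>0+1)/(n+1)\<close>;
  nonzero coordinates on the same side of \<open>s\<^sup>*\<close> agree, which yields the two-level zeros.\<close>

lemma gfun_eq_mult_pfun: "gfun n d s = s * pfun n d s"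
proof -
  define c where "c = real n + 1"
  define e where "e = d - 1"
  have "gfun n d s = (c*s + (-1))^e - (-1)^e" by (simp add: gfun_def c_def e_def)
  also have "(c*s + (-1))^e = (\<Sum>k\<le>e. of_nat (e choose k) * (c*s)^k * (-1)^(e-k))"
    by (rule binomial_ring)
  also have "\<dots> = (\<Sum>k\<in>{0..e}. of_nat (e choose k) * (c*s)^k * (-1)^(e-k))"
    by (simp add: atMost_atLeast0)
  also have "\<dots> = (-1)^e + (\<Sum>k\<in>{1..e}. of_nat (e choose k) * (c*s)^k * (-1)^(e-k))"
    by (subst sum.atLeast_Suc_atMost) auto
  also have "(\<Sum>k\<in>{1..e}. of_nat (e choose k) * (c*s)^k * (-1)^(e-k)) = s * pfun n d s"
    unfolding pfun_def sum_distrib_left c_def[symmetric] e_def[symmetric]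
  proof (rule sum.cong)
    fix k assume "k \<in> {1..e}"
    then have "s^k = s * s^(k-1)" by (cases k) auto
    then show "of_nat (e choose k) * (c*s)^k * (-1)^(e-k)
        = s * (real (e choose k) * c ^ k * (- 1) ^ (e - k) * s ^ (k - 1))"
      by (simp add: power_mult_distrib)
  qed simp
  finally show ?thesis by simp
qed

lemma continuous_on_pfun: "continuous_on A (pfun n d)"
  unfolding pfun_def by (intro continuous_intros)

definition deriv_numerator :: "nat \<Rightarrow> real \<Rightarrow> real" where
  "deriv_numerator e x = (real e - 1) * x^e + real e * x^(e-1) + (-1)^e"

lemma has_real_derivative_pfun:
  assumes "s > 0" "d \<ge> 2"
  shows "(pfun n d has_real_derivative
           deriv_numerator (d-1) ((real n + 1) * s - 1) / s^2) (at s)"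
proof -
  define c where "c = real n + 1"
  define e where "e = d - 1"
  define x where "x = c*s - 1"
  have "(gfun n d has_real_derivative real e * x^(e-1) * c) (at s)"
    unfolding gfun_def c_def[symmetric] e_def[symmetric] x_def
    by (auto intro!: derivative_eq_intros)
  then have quotient: "((\<lambda>y. gfun n d y / y) has_real_derivative
      (real e * x^(e-1) * c * s - gfun n d s) / s^2) (at s)"
    using DERIV_quotient[OF _ DERIV_ident] assms(1) by (force simp: power2_eq_square)
  have "x^e = x * x^(e-1)" using assms(2) by (cases e) (auto simp: e_def)
  moreover have "gfun n d s = x^e - (-1)^e" by (simp add: gfun_def x_def c_def e_def)
  ultimately have "real e * x^(e-1) * c * s - gfun n d s
      = real e * x^(e-1) * (x + 1) - (x * x^(e-1) - (-1)^e)"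
    by (simp add: x_def mult.assoc)
  then have "real e * x^(e-1) * c * s - gfun n d s = deriv_numerator e x"
    unfolding deriv_numerator_def \<open>x^e = x * x^(e-1)\<close> by (simp add: algebra_simps)
  then have "((\<lambda>y. gfun n d y / y) has_real_derivative
      deriv_numerator (d-1) ((real n + 1) * s - 1) / s^2) (at s)"
    using quotient by (simp add: x_def c_def e_def)
  then show ?thesis
  proof (rule has_field_derivative_transform_within_open[where S = "{0<..}"])
    fix y :: real assume "y \<in> {0<..}"
    then show "gfun n d y / y = pfun n d y" by (simp add: gfun_eq_mult_pfun)
  qed (use assms in auto)
qed

lemma has_real_derivative_deriv_numerator:
  assumes "e \<ge> 2"
  shows "(deriv_numerator e has_real_derivative
           real e * (real e - 1) * x^(e-2) * (x+1)) (at x)"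
proof -
  have "(deriv_numerator e has_real_derivative
          (real e - 1) * (real e * x^(e-1)) + real e * (real (e-1) * x^(e-1-1))) (at x)"
    unfolding deriv_numerator_def by (rule derivative_eq_intros refl)+ simp
  moreover have "e - 1 = Suc (e - 2)" using assms by simp
  ultimately show ?thesis using assms by (simp add: algebra_simps numeral_2_eq_2)
qed

lemma continuous_on_deriv_numerator: "continuous_on A (deriv_numerator e)"
  unfolding deriv_numerator_def by (intro continuous_intros)

lemma deriv_numerator_minus_one: "e \<ge> 1 \<Longrightarrow> deriv_numerator e (-1) = 0"
  unfolding deriv_numerator_def by (cases e) (auto simp: algebra_simps)

lemma deriv_numerator_pos_if_even:
  assumes "even e" "e \<ge> 2" "x > -1"
  shows "deriv_numerator e x > 0"
proof (cases "x \<ge> 0")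
  case True
  then show ?thesis using assms by (simp add: deriv_numerator_def add_nonneg_pos)
next
  case False
  have "deriv_numerator e (-1) < deriv_numerator e x"
  proof (rule DERIV_pos_imp_increasing_open[OF \<open>x > -1\<close> _ continuous_on_deriv_numerator])
    fix y :: real assume y: "-1 < y" "y < x"
    have "y^(e-2) > 0" using y False assms by (simp add: zero_less_power_eq)
    then have "real e * (real e - 1) * y^(e-2) * (y+1) > 0" using y assms by simp
    then show "\<exists>z. DERIV (deriv_numerator e) y :> z \<and> z > 0"
      using has_real_derivative_deriv_numerator[OF assms(2)] by blast
  qed
  then show ?thesis using deriv_numerator_minus_one[of e] assms by simp
qed

lemma deriv_numerator_neg_if_odd:
  assumes "odd e" "e \<ge> 2" "-1 < x" "x \<le> 0"
  shows "deriv_numerator e x < 0"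
proof -
  have "deriv_numerator e x < deriv_numerator e (-1)"
  proof (rule DERIV_neg_imp_decreasing_open[OF \<open>-1 < x\<close> _ continuous_on_deriv_numerator])
    fix y :: real assume y: "-1 < y" "y < x"
    have "y^(e-2) < 0" using y assms by (simp add: power_less_zero_eq)
    then have "real e * (real e - 1) * y^(e-2) * (y+1) < 0" using y assms
      by (simp add: mult_pos_neg mult_neg_pos)
    then show "\<exists>z. DERIV (deriv_numerator e) y :> z \<and> z < 0"
      using has_real_derivative_deriv_numerator[OF assms(2)] by blast
  qed
  then show ?thesis using deriv_numerator_minus_one[of e] assms by simp
qed

lemma deriv_numerator_strict_mono_nonneg:
  assumes "e \<ge> 2" "0 \<le> x" "x < y"
  shows "deriv_numerator e x < deriv_numerator e y"
proof -
  have "(real e - 1) * x^e \<le> (real e - 1) * y^e"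
    using assms by (intro mult_left_mono power_mono) auto
  moreover have "real e * x^(e-1) < real e * y^(e-1)"
    using assms by (simp add: power_strict_mono)
  ultimately show ?thesis by (simp add: deriv_numerator_def)
qed

lemma three_mult_le_two_power: "e \<ge> 3 \<Longrightarrow> 3 * e \<le> 2^e + (1::nat)"
  by (induction e rule: dec_induct) simp_all

lemma deriv_numerator_half_nonpos:
  assumes "odd e" "e \<ge> 3"
  shows "deriv_numerator e (1/2) \<le> 0"
proof -
  have "real (3 * e) \<le> real (2^e + 1)" using three_mult_le_two_power[OF assms(2)] by linarith
  then have bound: "3 * real e \<le> 2^e + 1" by simp
  have "(1/2::real)^(e-1) = 2 / 2^e" using assms by (cases e) (auto simp: power_divide)
  then have "deriv_numerator e (1/2) = (3 * real e - 1) / 2^e - 1"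
    unfolding deriv_numerator_def using assms by (simp add: power_divide field_simps)
  also have "\<dots> \<le> 0" using bound by (simp add: field_simps)
  finally show ?thesis .
qed

lemma deriv_numerator_sign_change:
  assumes "odd e" "e \<ge> 3"
  obtains x0 where "1/2 \<le> x0" "x0 < 1"
    "\<And>x. -1 < x \<Longrightarrow> x < x0 \<Longrightarrow> deriv_numerator e x < 0"
    "\<And>x. x0 < x \<Longrightarrow> deriv_numerator e x > 0"
proof -
  have at_one: "deriv_numerator e 1 > 0" using assms by (simp add: deriv_numerator_def)
  have "\<forall>x. 1/2 \<le> x \<and> x \<le> 1 \<longrightarrow> isCont (deriv_numerator e) x"
    unfolding deriv_numerator_def by (intro allI impI continuous_intros)
  from IVT[OF deriv_numerator_half_nonpos[OF assms] less_imp_le[OF at_one] _ this]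
  obtain x0 where x0: "1/2 \<le> x0" "x0 \<le> 1" "deriv_numerator e x0 = 0" by auto
  have "x0 \<noteq> 1" using at_one x0(3) by auto
  moreover have "deriv_numerator e x < 0" if "-1 < x" "x < x0" for x
  proof (cases "x \<le> 0")
    case True
    then show ?thesis using deriv_numerator_neg_if_odd[OF assms(1)] assms that by simp
  next
    case False
    then show ?thesis using deriv_numerator_strict_mono_nonneg[of e x x0] assms that x0 by simp
  qed
  moreover have "deriv_numerator e x > 0" if "x0 < x" for x
    using deriv_numerator_strict_mono_nonneg[of e x0 x] assms that x0 by simp
  ultimately show ?thesis using that x0 by simp
qed

lemma pfun_less_if_numerator_pos:
  assumes "d \<ge> 2" "0 \<le> u" "u < v"
    and pos: "\<And>y. u < y \<Longrightarrow> y < v \<Longrightarrow> deriv_numerator (d-1) ((real n + 1) * y - 1) > 0"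
  shows "pfun n d u < pfun n d v"
proof (rule DERIV_pos_imp_increasing_open[OF \<open>u < v\<close> _ continuous_on_pfun])
  fix y assume y: "u < y" "y < v"
  then have "y > 0" using assms by simp
  then show "\<exists>z. DERIV (pfun n d) y :> z \<and> z > 0"
    using has_real_derivative_pfun[OF _ \<open>d \<ge> 2\<close>] pos[OF y] by force
qed

lemma pfun_greater_if_numerator_neg:
  assumes "d \<ge> 2" "0 \<le> u" "u < v"
    and neg: "\<And>y. u < y \<Longrightarrow> y < v \<Longrightarrow> deriv_numerator (d-1) ((real n + 1) * y - 1) < 0"
  shows "pfun n d u > pfun n d v"
proof (rule DERIV_neg_imp_decreasing_open[OF \<open>u < v\<close> _ continuous_on_pfun])
  fix y assume y: "u < y" "y < v"
  then have "y > 0" using assms by simp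
  then show "\<exists>z. DERIV (pfun n d) y :> z \<and> z < 0"
    using has_real_derivative_pfun[OF _ \<open>d \<ge> 2\<close>] neg[OF y] by (force simp: divide_neg_pos)
qed

lemma strict_mono_on_pfun_odd:
  assumes "odd d" "d \<ge> 2"
  shows "strict_mono_on {0..} (pfun n d)"
proof (rule monotone_onI)
  fix u v :: real assume "u \<in> {0..}" "u < v"
  moreover have "even (d-1)" "d - 1 \<ge> 2" using assms by presburger+
  ultimately show "pfun n d u < pfun n d v"
    using pfun_less_if_numerator_pos[OF \<open>d \<ge> 2\<close>] deriv_numerator_pos_if_even by force
qed

lemma pfun_valley:
  assumes "n \<ge> 2" "even d" "d \<ge> 4"
  obtains t where "1 / real n \<le> t" "t < 2 / (real n + 1)"
    "strict_antimono_on {0..t} (pfun n d)" "strict_mono_on {t..} (pfun n d)"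
proof -
  define c where "c = real n + 1"
  have "odd (d-1)" "d - 1 \<ge> 3" using assms by presburger+
  from deriv_numerator_sign_change[OF this] obtain x0 where x0: "1/2 \<le> x0" "x0 < 1"
    "\<And>x. -1 < x \<Longrightarrow> x < x0 \<Longrightarrow> deriv_numerator (d-1) x < 0"
    "\<And>x. x0 < x \<Longrightarrow> deriv_numerator (d-1) x > 0"
    by blast
  define t where "t = (x0 + 1) / c"
  have "c > 0" by (simp add: c_def)
  have "real n > 0" using assms(1) by simp
  then have "1 / real n = (1 / real n + 1) / c" by (simp add: c_def divide_simps)
  also have "\<dots> \<le> t"
  proof -
    have "1 / real n \<le> 1 / 2" using assms(1) by (simp add: field_simps)
    then show ?thesis unfolding t_def using x0(1) \<open>c > 0\<close> by (simp add: divide_right_mono)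
  qed
  finally have "1 / real n \<le> t" .
  moreover have "t < 2 / c" unfolding t_def using x0(2) \<open>c > 0\<close> by (simp add: divide_strict_right_mono)
  moreover have "strict_antimono_on {0..t} (pfun n d)"
  proof (rule monotone_onI)
    fix u v assume "u \<in> {0..t}" "v \<in> {0..t}" "u < v"
    moreover have "deriv_numerator (d-1) (c * y - 1) < 0" if "0 < y" "y < t" for y
      using x0(3) that \<open>c > 0\<close> by (simp add: t_def field_simps)
    ultimately show "pfun n d v < pfun n d u"
      by (intro pfun_greater_if_numerator_neg) (use assms in \<open>auto simp: c_def\<close>)
  qed
  moreover have "strict_mono_on {t..} (pfun n d)"
  proof (rule monotone_onI)
    fix u v assume "u \<in> {t..}" "u < v"
    moreover have "deriv_numerator (d-1) (c * y - 1) > 0" if "t < y" for y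
      using x0(4) that \<open>c > 0\<close> by (simp add: t_def field_simps)
    moreover have "0 \<le> t" unfolding t_def using x0(1) \<open>c > 0\<close> by simp
    ultimately show "pfun n d u < pfun n d v"
      by (intro pfun_less_if_numerator_pos) (use assms in \<open>auto simp: c_def\<close>)
  qed
  ultimately show ?thesis using that[of t] by (simp add: c_def)
qed

lemma valley_unique:
  fixes f :: "'a::linorder \<Rightarrow> 'b::order"
  assumes "strict_antimono_on {c..b} f" "strict_mono_on {a..} f" "c \<le> a" "a < b"
  shows False
proof -
  have "f b < f a" using monotone_onD[OF assms(1), of a b] assms(3,4) by simp
  moreover have "f a < f b" using monotone_onD[OF assms(2), of a b] assms(4) by simp
  ultimately show False by simp
qed

lemma sstar_spec:
  assumes "n \<ge> 2" "even d" "d \<ge> 4"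
  shows "1 / real n \<le> sstar n d" "sstar n d < 2 / (real n + 1)"
    "strict_antimono_on {0..sstar n d} (pfun n d)" "strict_mono_on {sstar n d..} (pfun n d)"
proof -
  obtain t where t: "1 / real n \<le> t" "t < 2 / (real n + 1)"
    "strict_antimono_on {0..t} (pfun n d)" "strict_mono_on {t..} (pfun n d)"
    using pfun_valley[OF assms] .
  have "0 \<le> 1 / real n" by simp
  then have unique: "t' = t" if "1 / real n \<le> t'"
      "strict_antimono_on {0..t'} (pfun n d)" "strict_mono_on {t'..} (pfun n d)" for t'
  proof -
    have "0 \<le> t" "0 \<le> t'" using \<open>0 \<le> 1 / real n\<close> that(1) t(1) by linarith+
    then show ?thesis
      using valley_unique[of 0 t' "pfun n d" t] valley_unique[of 0 t "pfun n d" t'] that t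
      by (cases t t' rule: linorder_cases) auto
  qed
  have "1 / real n \<le> sstar n d \<and> sstar n d < 2 / (real n + 1)
      \<and> strict_antimono_on {0..sstar n d} (pfun n d) \<and> strict_mono_on {sstar n d..} (pfun n d)"
    unfolding sstar_def by (rule theI[where a = t]) (use t unique in blast)+
  then show "1 / real n \<le> sstar n d" "sstar n d < 2 / (real n + 1)"
    "strict_antimono_on {0..sstar n d} (pfun n d)" "strict_mono_on {sstar n d..} (pfun n d)"
    by auto
qed

lemma sum_residuals_eq_0:
  fixes x :: "'i \<Rightarrow> 'a::comm_ring_1"
  assumes "sum x I = 1"
  shows "(\<Sum>k\<in>I. x k * (\<Sum>j\<in>I. F (x j)) - F (x k)) = 0"
  using assms by (simp add: sum_subtractf flip: sum_distrib_right)

lemma balanced_iff_const_on_support: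
  fixes x :: "'i \<Rightarrow> real"
  assumes "sum x I = 1"
  shows "(\<forall>k\<in>I. x k * (\<Sum>j\<in>I. x j * q (x j)) = x k * q (x k))
     \<longleftrightarrow> (\<exists>L. \<forall>k\<in>I. x k \<noteq> 0 \<longrightarrow> q (x k) = L)"
proof
  assume "\<forall>k\<in>I. x k * (\<Sum>j\<in>I. x j * q (x j)) = x k * q (x k)"
  then show "\<exists>L. \<forall>k\<in>I. x k \<noteq> 0 \<longrightarrow> q (x k) = L"
    by (intro exI[of _ "\<Sum>j\<in>I. x j * q (x j)"]) auto
next
  assume "\<exists>L. \<forall>k\<in>I. x k \<noteq> 0 \<longrightarrow> q (x k) = L"
  then obtain L where "\<forall>k\<in>I. x k \<noteq> 0 \<longrightarrow> q (x k) = L" ..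
  then have L: "x k * q (x k) = x k * L" if "k \<in> I" for k
    using that by (cases "x k = 0") auto
  have "(\<Sum>j\<in>I. x j * q (x j)) = (\<Sum>j\<in>I. x j * L)" by (rule sum.cong) (simp_all add: L)
  also have "\<dots> = L" using assms by (simp flip: sum_distrib_right)
  finally have sum_eq: "(\<Sum>j\<in>I. x j * q (x j)) = L" .
  show "\<forall>k\<in>I. x k * (\<Sum>j\<in>I. x j * q (x j)) = x k * q (x k)"
    unfolding sum_eq by (metis L)
qed

lemma sum_sext:
  assumes "n \<ge> 1"
  shows "(\<Sum>k=1..n. F (sext n s k)) = F (1 - (\<Sum>j=1..n-1. s j)) + (\<Sum>j=1..n-1. F (s j))"
proof -
  have split: "{1..n} = insert n {1..n-1}" using assms by auto
  have "(\<Sum>k=1..n-1. F (sext n s k)) = (\<Sum>k=1..n-1. F (s k))"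
    by (rule sum.cong) (auto simp: sext_def)
  then show ?thesis unfolding split using assms by (simp add: sext_def)
qed

lemma sum_sext_eq_1: "n \<ge> 1 \<Longrightarrow> (\<Sum>k=1..n. sext n s k) = 1"
  using sum_sext[of n "\<lambda>x. x"] by simp

lemma hcomp_eq:
  assumes "n \<ge> 1" "k \<in> {1..n-1}"
  shows "hcomp n d s k
    = sext n s k * (\<Sum>j=1..n. gfun n d (sext n s j)) - gfun n d (sext n s k)"
proof -
  have "sext n s k = s k" using assms by (auto simp: sext_def)
  then show ?thesis using sum_sext[OF assms(1), of "gfun n d" s] by (simp add: hcomp_def)
qed

lemma hzero_iff_balanced:
  assumes "n \<ge> 2"
  shows "hzero n d s \<longleftrightarrow>
    (\<forall>k\<in>{1..n}. sext n s k * (\<Sum>j=1..n. gfun n d (sext n s j)) = gfun n d (sext n s k))"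
proof -
  define r where "r k = sext n s k * (\<Sum>j=1..n. gfun n d (sext n s j)) - gfun n d (sext n s k)"
    for k
  have split: "{1..n} = insert n {1..n-1}" using assms by auto
  \<comment> \<open>the residuals always sum to zero, so the \<open>n\<close>-th equation follows from the others\<close>
  have "r n + (\<Sum>k=1..n-1. r k) = (\<Sum>k=1..n. r k)" unfolding split using assms by simp
  also have "\<dots> = 0" using sum_residuals_eq_0[OF sum_sext_eq_1] assms by (simp add: r_def)
  finally have last: "r n = - (\<Sum>k=1..n-1. r k)" by simp
  have "hzero n d s \<longleftrightarrow> (\<forall>k\<in>{1..n-1}. r k = 0)"
    using assms by (simp add: hzero_def hcomp_eq r_def)
  also have "\<dots> \<longleftrightarrow> (\<forall>k\<in>{1..n}. r k = 0)"
    unfolding split using last by auto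
  finally show ?thesis by (simp add: r_def)
qed

definition sext_support :: "nat \<Rightarrow> (nat \<Rightarrow> real) \<Rightarrow> nat set" where
  "sext_support n s = {k \<in> {1..n}. sext n s k \<noteq> 0}"

lemma sext_support_subset: "sext_support n s \<subseteq> {1..n}"
  by (auto simp: sext_support_def)

lemma sum_sext_support:
  assumes "n \<ge> 1"
  shows "sum (sext n s) (sext_support n s) = 1"
proof -
  have "sum (sext n s) (sext_support n s) = (\<Sum>k=1..n. sext n s k)"
    unfolding sext_support_def by (rule sum.mono_neutral_left) auto
  then show ?thesis using sum_sext_eq_1[OF assms] by simp
qed

lemma sext_support_nonempty: "n \<ge> 1 \<Longrightarrow> sext_support n s \<noteq> {}"
  using sum_sext_support[of n s] by auto

lemma hzero_iff_pfun_const_on_support: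
  assumes "n \<ge> 2"
  shows "hzero n d s \<longleftrightarrow> (\<exists>L. \<forall>k\<in>sext_support n s. pfun n d (sext n s k) = L)"
proof -
  have "sum (sext n s) {1..n} = 1" using assms sum_sext_eq_1 by simp
  note balanced = balanced_iff_const_on_support[OF this, of "pfun n d"]
  show ?thesis
    unfolding hzero_iff_balanced[OF assms] gfun_eq_mult_pfun balanced sext_support_def
    by (simp add: Ball_def imp_conjL)
qed

lemma sext_bounds:
  assumes "n \<ge> 1" "in_simplex n s" "k \<in> {1..n}"
  shows "0 \<le> sext n s k" "sext n s k \<le> 1"
proof -
  have nonneg: "\<forall>j\<in>{1..n}. 0 \<le> sext n s j"
    using assms(2) unfolding in_simplex_def sext_def by auto
  then show "0 \<le> sext n s k" using assms(3) by blast
  have "sext n s k \<le> (\<Sum>j=1..n. sext n s j)"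
    using nonneg assms(3) by (intro member_le_sum) auto
  then show "sext n s k \<le> 1" using sum_sext_eq_1[OF assms(1)] by simp
qed

lemma sext_support_bounds:
  assumes "n \<ge> 1" "in_simplex n s" "k \<in> sext_support n s"
  shows "0 < sext n s k" "sext n s k \<le> 1"
  using sext_bounds[OF assms(1,2), of k] assms(3) by (auto simp: sext_support_def)

lemma uniform_on_sext_support:
  assumes "n \<ge> 1"
    and const: "\<And>k k'. k \<in> sext_support n s \<Longrightarrow> k' \<in> sext_support n s \<Longrightarrow> sext n s k = sext n s k'"
  shows "uniform_on n s (sext_support n s)"
proof -
  obtain k0 where k0: "k0 \<in> sext_support n s" using sext_support_nonempty[OF assms(1)] by blast
  have "real (card (sext_support n s)) * sext n s k0 = sum (sext n s) (sext_support n s)"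
    using const[OF _ k0] by simp
  also have "\<dots> = 1" using sum_sext_support[OF assms(1)] .
  moreover have "card (sext_support n s) \<noteq> 0"
    using sext_support_nonempty[OF assms(1)] by (simp add: sext_support_def)
  ultimately have "sext n s k0 = 1 / real (card (sext_support n s))"
    by (simp add: field_simps)
  then show ?thesis
    unfolding uniform_on_def
  proof (intro conjI ballI)
    fix k assume "k \<in> sext_support n s"
    then have "sext n s k = sext n s k0" by (rule const[OF _ k0])
    then show "sext n s k = 1 / real (card (sext_support n s))"
      using \<open>sext n s k0 = _\<close> by simp
  qed (simp add: sext_support_def)
qed

lemma hzero_if_uniform_on:
  assumes "n \<ge> 2" "uniform_on n s K"
  shows "hzero n d s"
proof -
  have "sext n s k = 1 / real (card K)" if "k \<in> sext_support n s" for k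
  proof -
    have "k \<in> K" using assms(2) that unfolding uniform_on_def sext_support_def by auto
    then show ?thesis using assms(2) by (simp add: uniform_on_def)
  qed
  then show ?thesis using hzero_iff_pfun_const_on_support[OF assms(1)] by auto
qed

lemma hzero_quadratic:
  assumes "n \<ge> 2"
  shows "hzero n 2 s"
proof -
  have "\<forall>k\<in>sext_support n s. pfun n 2 (sext n s k) = real n + 1" by (simp add: pfun_def)
  then show ?thesis using hzero_iff_pfun_const_on_support[OF assms] by blast
qed

lemma hzero_odd_imp_uniform_on:
  assumes "n \<ge> 2" "odd d" "d \<ge> 2" "in_simplex n s" "hzero n d s"
  shows "\<exists>K. K \<noteq> {} \<and> K \<subseteq> {1..n} \<and> uniform_on n s K"
proof (intro exI conjI)
  obtain L where L: "\<And>k. k \<in> sext_support n s \<Longrightarrow> pfun n d (sext n s k) = L"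
    using assms(5) hzero_iff_pfun_const_on_support[OF assms(1)] by blast
  have inj: "inj_on (pfun n d) {0..}"
    using strict_mono_on_pfun_odd[OF assms(2,3)] by (rule strict_mono_on_imp_inj_on)
  have nonneg: "sext n s k \<in> {0..}" if "k \<in> sext_support n s" for k
    using sext_support_bounds(1)[OF _ assms(4) that] assms(1) by simp
  show "uniform_on n s (sext_support n s)"
  proof (rule uniform_on_sext_support)
    fix k k' assume "k \<in> sext_support n s" "k' \<in> sext_support n s"
    with L nonneg show "sext n s k = sext n s k'" by (auto intro: inj_onD[OF inj])
  qed (use assms(1) in simp)
  show "sext_support n s \<noteq> {}" using sext_support_nonempty assms(1) by simp
qed (rule sext_support_subset)

lemma eq_if_same_side_of_valley:
  fixes f :: "real \<Rightarrow> 'b::order"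
  assumes "strict_antimono_on {0..t} f" "strict_mono_on {t..} f"
    and "0 \<le> u" "0 \<le> v" "u \<le> t \<longleftrightarrow> v \<le> t" "f u = f v"
  shows "u = v"
proof (cases "u \<le> t")
  case True
  have "inj_on f {0..t}" using assms(1) strict_antimono_iff_antimono by blast
  then show ?thesis using True assms(3-6) by (auto dest: inj_onD)
next
  case False
  have "inj_on f {t..}" using assms(2) by (rule strict_mono_on_imp_inj_on)
  then show ?thesis using False assms(5,6) by (auto dest: inj_onD)
qed

definition even_zero_pattern :: "nat \<Rightarrow> nat \<Rightarrow> (nat \<Rightarrow> real) \<Rightarrow> nat set \<Rightarrow> nat set \<Rightarrow> bool" where
  "even_zero_pattern n d s K1 K2 \<longleftrightarrow>
     (K1 = {} \<and> 1 / real (card K2) > sstar n d \<and> uniform_on n s K2)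
   \<or> (K2 = {} \<and> 1 / real (card K1) \<le> sstar n d \<and> uniform_on n s K1)
   \<or> (K1 \<noteq> {} \<and> K2 \<noteq> {} \<and>
      (\<exists>a b. 0 < a \<and> a < sstar n d
         \<and> pfun n d a - pfun n d ((1 - real (card K1) * a) / real (card K2)) = 0
         \<and> b = (1 - real (card K1) * a) / real (card K2)
         \<and> sstar n d < b \<and> b \<le> 1
         \<and> (\<forall>k\<in>K1. sext n s k = a) \<and> (\<forall>k\<in>K2. sext n s k = b)
         \<and> (\<forall>k\<in>{1..n} - (K1 \<union> K2). sext n s k = 0)))"

lemma even_zero_pattern_two_levels:
  assumes "n \<ge> 2" "even d" "d \<ge> 4"
    and parts: "K1 \<union> K2 = sext_support n s" "K1 \<inter> K2 = {}" "K1 \<noteq> {}" "K2 \<noteq> {}"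
    and levels: "\<forall>k\<in>K1. sext n s k = a" "\<forall>k\<in>K2. sext n s k = b"
    and bounds: "0 < a" "a \<le> sstar n d" "sstar n d < b" "b \<le> 1"
    and same_value: "pfun n d a = pfun n d b"
  shows "even_zero_pattern n d s K1 K2"
proof -
  have "pfun n d (sstar n d) < pfun n d b"
    using monotone_onD[OF sstar_spec(4)[OF assms(1-3)]] bounds(3) by simp
  then have "a < sstar n d" using bounds(2) same_value by (cases "a = sstar n d") auto
  have "finite (K1 \<union> K2)" unfolding parts(1) by (rule finite_subset[OF sext_support_subset]) simp
  then have "finite K1" "finite K2" by simp_all
  have "1 = sum (sext n s) (K1 \<union> K2)" unfolding parts(1) using sum_sext_support assms(1) by simp
  also have "\<dots> = sum (sext n s) K1 + sum (sext n s) K2"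
    using \<open>finite K1\<close> \<open>finite K2\<close> parts(2) by (rule sum.union_disjoint)
  also have "\<dots> = real (card K1) * a + real (card K2) * b" using levels by simp
  finally have "b = (1 - real (card K1) * a) / real (card K2)"
    using parts(4) \<open>finite K2\<close> by (simp add: field_simps)
  moreover have "\<forall>k\<in>{1..n} - (K1 \<union> K2). sext n s k = 0"
    unfolding parts(1) by (simp add: sext_support_def)
  ultimately have "0 < a \<and> a < sstar n d
      \<and> pfun n d a - pfun n d ((1 - real (card K1) * a) / real (card K2)) = 0
      \<and> b = (1 - real (card K1) * a) / real (card K2) \<and> sstar n d < b \<and> b \<le> 1
      \<and> (\<forall>k\<in>K1. sext n s k = a) \<and> (\<forall>k\<in>K2. sext n s k = b)
      \<and> (\<forall>k\<in>{1..n} - (K1 \<union> K2). sext n s k = 0)"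
    using levels bounds same_value \<open>a < sstar n d\<close> by simp
  then show ?thesis unfolding even_zero_pattern_def using parts(3,4) by blast
qed

lemma uniform_on_imp_even_zero_pattern:
  assumes "uniform_on n s K" "K \<noteq> {}" "K \<subseteq> {1..n}"
  shows "\<exists>K1 K2. K1 \<subseteq> {1..n} \<and> K2 \<subseteq> {1..n} \<and> K1 \<inter> K2 = {} \<and> (K1 \<noteq> {} \<or> K2 \<noteq> {})
           \<and> even_zero_pattern n d s K1 K2"
proof (cases "1 / real (card K) \<le> sstar n d")
  case True
  then have "even_zero_pattern n d s K {}" using assms(1) by (simp add: even_zero_pattern_def)
  then show ?thesis using assms(2,3) by blast
next
  case False
  then have "even_zero_pattern n d s {} K" using assms(1) by (simp add: even_zero_pattern_def)
  then show ?thesis using assms(2,3) by blast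
qed

lemma hzero_even_eq_if_same_side:
  assumes "n \<ge> 2" "even d" "d \<ge> 4" "in_simplex n s" "hzero n d s"
    and "k \<in> sext_support n s" "k' \<in> sext_support n s"
    and "sext n s k \<le> sstar n d \<longleftrightarrow> sext n s k' \<le> sstar n d"
  shows "sext n s k = sext n s k'"
proof (rule eq_if_same_side_of_valley[OF sstar_spec(3,4)[OF assms(1-3)]])
  show "0 \<le> sext n s k" "0 \<le> sext n s k'"
    using sext_support_bounds(1)[OF _ assms(4)] assms(1,6,7) by (simp_all add: less_imp_le)
  show "pfun n d (sext n s k) = pfun n d (sext n s k')"
    using assms(5-7) hzero_iff_pfun_const_on_support[OF assms(1)] by metis
qed (fact assms(8))

lemma hzero_even_imp_pattern:
  assumes "n \<ge> 2" "even d" "d \<ge> 4" "in_simplex n s" "hzero n d s"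
  shows "\<exists>K1 K2. K1 \<subseteq> {1..n} \<and> K2 \<subseteq> {1..n} \<and> K1 \<inter> K2 = {} \<and> (K1 \<noteq> {} \<or> K2 \<noteq> {})
           \<and> even_zero_pattern n d s K1 K2"
proof -
  let ?t = "sstar n d" and ?S = "sext_support n s"
  define K1 where "K1 = {k \<in> ?S. sext n s k \<le> ?t}"
  define K2 where "K2 = {k \<in> ?S. ?t < sext n s k}"
  note level = hzero_even_eq_if_same_side[OF assms]
  have parts: "K1 \<union> K2 = ?S" "K1 \<inter> K2 = {}" "K1 \<subseteq> {1..n}" "K2 \<subseteq> {1..n}"
    using sext_support_subset[of n s] by (auto simp: K1_def K2_def)
  show ?thesis
  proof (cases "K1 = {} \<or> K2 = {}")
    case True
    then have "(\<forall>k\<in>?S. sext n s k \<le> ?t) \<or> (\<forall>k\<in>?S. ?t < sext n s k)"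
      unfolding K1_def K2_def by (auto simp: not_le not_less)
    then have same_side: "sext n s k \<le> ?t \<longleftrightarrow> sext n s k' \<le> ?t" if "k \<in> ?S" "k' \<in> ?S" for k k'
      using that by (meson not_le)
    have "uniform_on n s ?S"
    proof (rule uniform_on_sext_support)
      fix k k' assume "k \<in> ?S" "k' \<in> ?S"
      then show "sext n s k = sext n s k'" using level same_side by blast
    qed (use assms(1) in simp)
    moreover have "?S \<noteq> {}" using sext_support_nonempty assms(1) by simp
    ultimately show ?thesis using sext_support_subset by (rule uniform_on_imp_even_zero_pattern)
  next
    case False
    then have nonempty: "K1 \<noteq> {}" "K2 \<noteq> {}" by simp_all
    then obtain k1 k2 where k1: "k1 \<in> K1" and k2: "k2 \<in> K2" by blast
    have "\<forall>k\<in>K1. sext n s k = sext n s k1"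
    proof
      fix k assume "k \<in> K1"
      show "sext n s k = sext n s k1" by (rule level) (use \<open>k \<in> K1\<close> k1 in \<open>auto simp: K1_def\<close>)
    qed
    moreover have "\<forall>k\<in>K2. sext n s k = sext n s k2"
    proof
      fix k assume "k \<in> K2"
      show "sext n s k = sext n s k2" by (rule level) (use \<open>k \<in> K2\<close> k2 in \<open>auto simp: K2_def\<close>)
    qed
    moreover have "0 < sext n s k1" "sext n s k1 \<le> ?t" "?t < sext n s k2" "sext n s k2 \<le> 1"
      using k1 k2 sext_support_bounds[OF _ assms(4)] assms(1) by (auto simp: K1_def K2_def)
    moreover have "pfun n d (sext n s k1) = pfun n d (sext n s k2)"
      using k1 k2 assms(5) hzero_iff_pfun_const_on_support[OF assms(1)]
      unfolding K1_def K2_def by (metis (mono_tags, lifting) mem_Collect_eq)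
    ultimately have "even_zero_pattern n d s K1 K2"
      using parts(1,2) nonempty by (intro even_zero_pattern_two_levels[OF assms(1-3)])
    then show ?thesis using parts nonempty by blast
  qed
qed

lemma hzero_if_even_zero_pattern:
  assumes "n \<ge> 2" "even_zero_pattern n d s K1 K2"
  shows "hzero n d s"
proof -
  from assms(2) consider (one_level) K where "uniform_on n s K"
    | (two_levels) a b where "\<forall>k\<in>K1. sext n s k = a" "\<forall>k\<in>K2. sext n s k = b"
        "\<forall>k\<in>{1..n} - (K1 \<union> K2). sext n s k = 0" "pfun n d a - pfun n d b = 0"
    unfolding even_zero_pattern_def by blast
  then show ?thesis
  proof cases
    case one_level
    then show ?thesis by (rule hzero_if_uniform_on[OF assms(1)])
  next
    case two_levels
    then have "pfun n d (sext n s k) = pfun n d a" if "k \<in> sext_support n s" for k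
      using that by (cases "k \<in> K1") (auto simp: sext_support_def)
    then show ?thesis using hzero_iff_pfun_const_on_support[OF assms(1)] by blast
  qed
qed

lemma hzero_even_iff_pattern:
  assumes "n \<ge> 2" "even d" "d \<ge> 4" "in_simplex n s"
  shows "hzero n d s \<longleftrightarrow> (\<exists>K1 K2. K1 \<subseteq> {1..n} \<and> K2 \<subseteq> {1..n} \<and> K1 \<inter> K2 = {}
           \<and> (K1 \<noteq> {} \<or> K2 \<noteq> {}) \<and> even_zero_pattern n d s K1 K2)"
proof
  assume "hzero n d s"
  then show "\<exists>K1 K2. K1 \<subseteq> {1..n} \<and> K2 \<subseteq> {1..n} \<and> K1 \<inter> K2 = {}
      \<and> (K1 \<noteq> {} \<or> K2 \<noteq> {}) \<and> even_zero_pattern n d s K1 K2"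
    by (rule hzero_even_imp_pattern[OF assms])
qed (use hzero_if_even_zero_pattern[OF assms(1)] in blast)

theorem mainTheorem5:
  fixes n d :: nat
  assumes "n \<ge> 2" and "d \<ge> 2"
  shows
   "(\<forall>s. in_simplex n s \<and> (\<exists>K. K \<noteq> {} \<and> K \<subseteq> {1..n} \<and> uniform_on n s K)
        \<longrightarrow> hzero n d s)
  \<and> (d = 2 \<longrightarrow> (\<forall>s. hzero n d s))
  \<and> (odd d \<longrightarrow> (\<forall>s. in_simplex n s \<and> hzero n d s
        \<longrightarrow> (\<exists>K. K \<noteq> {} \<and> K \<subseteq> {1..n} \<and> uniform_on n s K)))
  \<and> (even d \<and> d \<ge> 4 \<longrightarrow> (\<forall>s. in_simplex n s \<longrightarrow>
        (hzero n d s \<longleftrightarrow>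
          (\<exists>K1 K2. K1 \<subseteq> {1..n} \<and> K2 \<subseteq> {1..n} \<and> K1 \<inter> K2 = {}
            \<and> (K1 \<noteq> {} \<or> K2 \<noteq> {})
            \<and> ((K1 = {} \<and> 1 / real (card K2) > sstar n d \<and> uniform_on n s K2)
               \<or> (K2 = {} \<and> 1 / real (card K1) \<le> sstar n d \<and> uniform_on n s K1)
               \<or> (K1 \<noteq> {} \<and> K2 \<noteq> {} \<and>
                  (\<exists>a b. 0 < a \<and> a < sstar n d
                     \<and> pfun n d a - pfun n d ((1 - real (card K1) * a) / real (card K2)) = 0
                     \<and> b = (1 - real (card K1) * a) / real (card K2)
                     \<and> sstar n d < b \<and> b \<le> 1
                     \<and> (\<forall>k\<in>K1. sext n s k = a) \<and> (\<forall>k\<in>K2. sext n s k = b)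
                     \<and> (\<forall>k\<in>{1..n} - (K1 \<union> K2). sext n s k = 0))))))))"
  unfolding even_zero_pattern_def[symmetric]
proof (intro conjI impI allI)
  fix s
  show "hzero n d s" if "in_simplex n s \<and> (\<exists>K. K \<noteq> {} \<and> K \<subseteq> {1..n} \<and> uniform_on n s K)"
    using that hzero_if_uniform_on[OF assms(1)] by blast
  show "hzero n d s" if "d = 2"
    using that hzero_quadratic[OF assms(1)] by simp
  show "\<exists>K. K \<noteq> {} \<and> K \<subseteq> {1..n} \<and> uniform_on n s K"
    if "odd d" "in_simplex n s \<and> hzero n d s"
    using that hzero_odd_imp_uniform_on[OF assms(1) _ assms(2)] by blast
  show "hzero n d s \<longleftrightarrow> (\<exists>K1 K2. K1 \<subseteq> {1..n} \<and> K2 \<subseteq> {1..n} \<and> K1 \<inter> K2 = {}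
      \<and> (K1 \<noteq> {} \<or> K2 \<noteq> {}) \<and> even_zero_pattern n d s K1 K2)"
    if "even d \<and> d \<ge> 4" "in_simplex n s"
    using that hzero_even_iff_pattern[OF assms(1)] by blast
qed

end
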